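(* For any non-null loop $l$ in $\mathbb{Z}^d$, $\mathrm{area}(l)$ is at most the minimum number of deformation steps in a vanishing trajectory starting from $l$; that is, every vanishing trajectory starting at $l$ contains at least $\mathrm{area}(l)$ deformation steps.
   Context: Lattice, paths and loops. $E$ is the set of directed nearest-neighbour edges of $\mathbb{Z}^d$ ($d\ge2$); $e$ goes from $u(e)$ to $v(e)$, $e^{-1}$ is the reversed edge; $e$ is positively oriented if $v(e)$ is lexicographically larger than $u(e)$, and $E^+$ is the set of such edges. Paths, closed paths (the null path included), cycles (classes of closed paths under cyclic rotation); each cycle has a first edge fixed by an arbitrary rule and "location $k$" is its $k$-th edge. A closed path $e_1\cdots e_n$ has a backtrack at $i\le n-1$ if $e_{i+1}=e_i^{-1}$ and at $n$ if $e_1=e_n^{-1}$; successively erasing backtracks (removing both edges) until none remain gives a well-defined cycle $[\cdot]$. A loop is a cycle without backtracks (including the null loop). A plaquette is a nonbacktracking closed path of length 4; $\mathcal{P}^+$ is the set of plaquettes $e_1e_2e_3e_4$ with $u(e_1)$ lexicographically smallest and $v(e_1)$ second smallest among its vertices. Loop sequences: finite sequences of loops modulo inserting/deleting null loops, with minimal representations without null loops. Operations and trajectories. For non-null loops $l,l'$ and locations $x,y$: same edge $e$: $l=aeb$, $l'=ced$, $l\oplus_{x,y}l'=[aedceb]$, $l\ominus_{x,y}l'=[ac^{-1}d^{-1}b]$; $e$ vs $e^{-1}$: $l=aeb$, $l'=ce^{-1}d$, $l\oplus_{x,y}l'=[aec^{-1}d^{-1}eb]$, $l\ominus_{x,y}l'=[adcb]$.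 Deformations of $l$: $l\oplus_{x,y}p$, $l\ominus_{x,y}p$ for plaquettes $p$ containing the edge at location $x$ of $l$ or its inverse. Splittings at distinct locations $x,y$: $l=aebec$ (displayed $e$'s at $x,y$ respectively) gives $([aec],[be])$; $l=aebe^{-1}c$ gives $([ac],[b])$. A deformation (splitting) of a loop sequence replaces one component by a deformation (by the two loops of a splitting) of it. A trajectory is a sequence of loop sequences each obtained from the previous by a deformation or a splitting; a vanishing trajectory is finite and ends at the null loop sequence. Area. $1$-chains are elements of the free $\mathbb{Z}$-module over $E^+$, lattice surfaces elements of the free $\mathbb{Z}$-module over $\mathcal{P}^+$. Each $p\in\mathcal{P}^+$ is uniquely $e_1e_2e_3^{-1}e_4^{-1}$ with $e_i\in E^+$, and $\delta(p)=e_1+e_2-e_3-e_4$ extended linearly. For $e\in E$, $r(e)=e$ if $e\in E^+$ and $r(e)=-e^{-1}$ otherwise; $r(l)=\sum_i r(e_i)$ for $l=e_1\cdots e_n$. $\mathrm{area}(\sum n_pp)=\sum|n_p|$ and $\mathrm{area}(l)$ is the minimal area of a lattice surface $x$ with $\delta(x)=r(l)$. *)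

theory Defs
  imports Main
begin

type_synonym vert = "int list"
type_synonym edge = "vert \<times> vert"

definition lattice_edge :: "nat \<Rightarrow> edge \<Rightarrow> bool" where
  "lattice_edge d e \<longleftrightarrow> length (fst e) = d \<and>
     (\<exists>i<d. snd e = (fst e)[i := fst e ! i + 1] \<or> snd e = (fst e)[i := fst e ! i - 1])"

definition einv :: "edge \<Rightarrow> edge" where
  "einv e = (snd e, fst e)"

definition lex_less :: "vert \<Rightarrow> vert \<Rightarrow> bool" where
  "lex_less u v \<longleftrightarrow> (u, v) \<in> lexord {(a, b). a < (b::int)}"

definition positive_edge :: "nat \<Rightarrow> edge \<Rightarrow> bool" where
  "positive_edge d e \<longleftrightarrow> lattice_edge d e \<and> lex_less (fst e) (snd e)"

definition is_path :: "nat \<Rightarrow> edge list \<Rightarrow> bool" where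
  "is_path d w \<longleftrightarrow> (\<forall>e\<in>set w. lattice_edge d e) \<and>
     (\<forall>i. Suc i < length w \<longrightarrow> snd (w ! i) = fst (w ! Suc i))"

definition closed_path :: "nat \<Rightarrow> edge list \<Rightarrow> bool" where
  "closed_path d w \<longleftrightarrow> is_path d w \<and> (w \<noteq> [] \<longrightarrow> snd (last w) = fst (hd w))"

definition pinv :: "edge list \<Rightarrow> edge list" where
  "pinv c = rev (map einv c)"

text \<open>Cycles: closed paths modulo cyclic rotation.\<close>
definition rot_eq :: "'a list \<Rightarrow> 'a list \<Rightarrow> bool" where
  "rot_eq a b \<longleftrightarrow> (\<exists>n. b = rotate n a)"

text \<open>Erasing one backtrack of a closed path, at a position i < n or at position n.\<close>
inductive erase1 :: "edge list \<Rightarrow> edge list \<Rightarrow> bool" where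
  inner: "erase1 (xs @ [e, einv e] @ ys) (xs @ ys)"
| wrap: "erase1 ([e] @ ys @ [einv e]) ys"

definition no_backtrack :: "edge list \<Rightarrow> bool" where
  "no_backtrack w \<longleftrightarrow> \<not> (\<exists>w'. erase1 w w')"

text \<open>l is (a representative of) the cycle [w] obtained by successively erasing backtracks.\<close>
definition reduces :: "edge list \<Rightarrow> edge list \<Rightarrow> bool" where
  "reduces w l \<longleftrightarrow> (\<exists>l'. erase1\<^sup>*\<^sup>* w l' \<and> no_backtrack l' \<and> rot_eq l' l)"

definition is_loop :: "nat \<Rightarrow> edge list \<Rightarrow> bool" where
  "is_loop d l \<longleftrightarrow> closed_path d l \<and> no_backtrack l"

definition plaquette :: "nat \<Rightarrow> edge list \<Rightarrow> bool" where
  "plaquette d p \<longleftrightarrow> closed_path d p \<and> length p = 4 \<and> no_backtrack p"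

definition deform :: "nat \<Rightarrow> edge list \<Rightarrow> edge list \<Rightarrow> bool" where
  "deform d l l' \<longleftrightarrow> is_loop d l \<and> l \<noteq> [] \<and>
    (\<exists>a e b c f p. l = a @ [e] @ b \<and> plaquette d p \<and>
      ((p = c @ [e] @ f \<and>
          (reduces (a @ [e] @ f @ c @ [e] @ b) l' \<or> reduces (a @ pinv c @ pinv f @ b) l')) \<or>
       (p = c @ [einv e] @ f \<and>
          (reduces (a @ [e] @ pinv c @ pinv f @ [e] @ b) l' \<or> reduces (a @ f @ c @ b) l'))))"

definition split_loop :: "nat \<Rightarrow> edge list \<Rightarrow> edge list \<Rightarrow> edge list \<Rightarrow> bool" where
  "split_loop d l l1 l2 \<longleftrightarrow> is_loop d l \<and> l \<noteq> [] \<and>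
    (\<exists>a e b c.
       (l = a @ [e] @ b @ [e] @ c \<and> reduces (a @ [e] @ c) l1 \<and> reduces (b @ [e]) l2) \<or>
       (l = a @ [e] @ b @ [einv e] @ c \<and> reduces (a @ c) l1 \<and> reduces b l2))"

text \<open>Loop sequences modulo null loops and rotation of each component.\<close>
definition seq_eq :: "edge list list \<Rightarrow> edge list list \<Rightarrow> bool" where
  "seq_eq s t \<longleftrightarrow> list_all2 rot_eq (filter (\<lambda>x. x \<noteq> []) s) (filter (\<lambda>x. x \<noteq> []) t)"

definition traj_step :: "nat \<Rightarrow> bool \<Rightarrow> edge list list \<Rightarrow> edge list list \<Rightarrow> bool" where
  "traj_step d k s s' \<longleftrightarrow> (\<exists>A l B C. seq_eq s (A @ [l] @ B) \<and> seq_eq s' (A @ C @ B) \<and>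
     (if k then (\<exists>l'. C = [l'] \<and> deform d l l')
           else (\<exists>l1 l2. C = [l1, l2] \<and> split_loop d l l1 l2)))"

definition vanishing_traj :: "nat \<Rightarrow> edge list list list \<Rightarrow> bool list \<Rightarrow> bool" where
  "vanishing_traj d s ks \<longleftrightarrow> s \<noteq> [] \<and> length ks = length s - 1 \<and>
     (\<forall>i<length ks. traj_step d (ks ! i) (s ! i) (s ! Suc i)) \<and> seq_eq (last s) []"

definition ind :: "edge \<Rightarrow> edge \<Rightarrow> int" where
  "ind e = (\<lambda>f. if f = e then 1 else 0)"

text \<open>r(e) as a 1-chain (function on edges, supported on positive edges).\<close>
definition r_edge :: "edge \<Rightarrow> edge \<Rightarrow> int" where
  "r_edge e = (if lex_less (fst e) (snd e) then ind e else (\<lambda>f. - ind (einv e) f))"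

definition r_loop :: "edge list \<Rightarrow> edge \<Rightarrow> int" where
  "r_loop l = (\<lambda>f. sum_list (map (\<lambda>e. r_edge e f) l))"

definition plaq_pos :: "nat \<Rightarrow> edge list \<Rightarrow> bool" where
  "plaq_pos d p \<longleftrightarrow> plaquette d p \<and>
     (\<forall>w\<in>fst ` set p. w \<noteq> fst (p ! 0) \<longrightarrow> lex_less (fst (p ! 0)) w) \<and>
     (\<forall>w\<in>fst ` set p - {fst (p ! 0), snd (p ! 0)}. lex_less (snd (p ! 0)) w)"

text \<open>p = e1 e2 e3^{-1} e4^{-1}, delta(p) = e1 + e2 - e3 - e4.\<close>
definition delta_p :: "edge list \<Rightarrow> edge \<Rightarrow> int" where
  "delta_p p = (\<lambda>f. ind (p ! 0) f + ind (p ! 1) f - ind (einv (p ! 2)) f - ind (einv (p ! 3)) f)"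

text \<open>Lattice surfaces: finitely supported integer functions on P^+.\<close>
definition surface :: "nat \<Rightarrow> (edge list \<Rightarrow> int) \<Rightarrow> bool" where
  "surface d x \<longleftrightarrow> finite {p. x p \<noteq> 0} \<and> (\<forall>p. x p \<noteq> 0 \<longrightarrow> plaq_pos d p)"

definition delta :: "(edge list \<Rightarrow> int) \<Rightarrow> edge \<Rightarrow> int" where
  "delta x = (\<lambda>f. \<Sum>p\<in>{p. x p \<noteq> 0}. x p * delta_p p f)"

definition surf_area :: "(edge list \<Rightarrow> int) \<Rightarrow> nat" where
  "surf_area x = (\<Sum>p\<in>{p. x p \<noteq> 0}. nat \<bar>x p\<bar>)"

definition loop_area :: "nat \<Rightarrow> edge list \<Rightarrow> nat" where
  "loop_area d l = (LEAST n. \<exists>x. surface d x \<and> delta x = r_loop l \<and> surf_area x = n)"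

end

theory Submission
  imports Defs "HOL-Library.List_Lexorder"
begin

text \<open>The map \<open>r\<close> sends a loop sequence to the sum of the 1-chains of its loops. Erasing
  backtracks and rotating a path leave \<open>r\<close> unchanged, so a splitting preserves it while a
  deformation by a plaquette \<open>p\<close> changes it by \<open>\<plusminus>r(p)\<close>, and \<open>r(p)\<close> is \<open>\<plusminus>\<delta>\<close> of a single
  positive plaquette. Accumulating these plaquettes along a vanishing trajectory from \<open>l\<close> gives a
  lattice surface \<open>x\<close> with \<open>\<delta>(x) = r(l)\<close> and area at most the number of deformations.\<close>

lemma lex_less_iff_less: "lex_less u v \<longleftrightarrow> u < v"
  by (simp add: lex_less_def list_less_def)

lemma less_list_translate:
  fixes u v u' v' :: "int list"
  assumes len: "length v = length u" "length u' = length u" "length v' = length u"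
    and same_diff: "\<And>j. j < length u \<Longrightarrow> v ! j - u ! j = v' ! j - u' ! j"
    and "u < v"
  shows "u' < v'"
proof -
  obtain i where i: "i < length u" "take i u = take i v" "u ! i < v ! i"
    using \<open>u < v\<close> len unfolding list_less_def lexord_take_index_conv by auto
  have "u' ! j = v' ! j" if "j < i" for j
    using i same_diff[of j] nth_take[OF that, of u] nth_take[OF that, of v] that by simp
  then have "take i u' = take i v'" using i(1) len by (intro nth_equalityI) auto
  moreover have "u' ! i < v' ! i" using same_diff[OF i(1)] i(3) by simp
  ultimately show ?thesis using i(1) len unfolding list_less_def lexord_take_index_conv by auto
qed

lemma einv_einv [simp]: "einv (einv e) = e" by (simp add: einv_def)
lemma fst_einv [simp]: "fst (einv e) = snd e" by (simp add: einv_def)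
lemma snd_einv [simp]: "snd (einv e) = fst e" by (simp add: einv_def)

definition edge_step :: "edge \<Rightarrow> nat \<Rightarrow> int" where
  "edge_step e j = snd e ! j - fst e ! j"

lemma lattice_edge_unit_step:
  assumes "lattice_edge d e"
  shows "length (fst e) = d \<and> length (snd e) = d \<and>
    (\<exists>i<d. \<exists>s. (s = 1 \<or> s = -1) \<and> (\<forall>j<d. edge_step e j = (if j = i then s else 0)))"
proof -
  obtain i where i: "i < d" and len: "length (fst e) = d"
    and "snd e = (fst e)[i := fst e ! i + 1] \<or> snd e = (fst e)[i := fst e ! i - 1]"
    using assms unfolding lattice_edge_def by auto
  then obtain s where "s = 1 \<or> s = -1" "snd e = (fst e)[i := fst e ! i + s]"
    by (metis diff_conv_add_uminus)
  then show ?thesis using i len by (auto simp: edge_step_def nth_list_update)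
qed

lemma lattice_edge_fst_neq_snd:
  assumes "lattice_edge d e"
  shows "fst e \<noteq> snd e"
proof
  assume "fst e = snd e"
  moreover obtain i s where "i < d" "s = 1 \<or> s = -1" "\<forall>j<d. edge_step e j = (if j = i then s else 0)"
    using lattice_edge_unit_step[OF assms] by blast
  ultimately show False by (auto simp: edge_step_def)
qed

lemma lattice_edge_einv: "lattice_edge d e \<Longrightarrow> lattice_edge d (einv e)"
  unfolding lattice_edge_def by (auto simp: list_update_overwrite)

lemma consecutive_steps_not_opposite:
  assumes "lattice_edge d a" "lattice_edge d b" "snd a = fst b" "snd b \<noteq> fst a"
  shows "\<exists>j<d. edge_step a j + edge_step b j \<noteq> 0"
proof -
  have "length (snd b) = d" "length (fst a) = d"
    using assms(1,2) lattice_edge_unit_step by blast+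
  then obtain j where "j < d" "snd b ! j \<noteq> fst a ! j"
    using assms(4) nth_equalityI by metis
  then show ?thesis using assms(3) by (auto simp: edge_step_def)
qed

lemma signed_unit_vectors_sum_zero:
  fixes ia ib ic ie :: nat and sa sb sc se :: int
  assumes "sa = 1 \<or> sa = -1" "sb = 1 \<or> sb = -1" "sc = 1 \<or> sc = -1" "se = 1 \<or> se = -1"
    and sum_zero: "\<And>j. (if j = ia then sa else 0) + (if j = ib then sb else 0)
                      + (if j = ic then sc else 0) + (if j = ie then se else 0) = 0"
    and "\<not> (ia = ib \<and> sa + sb = 0)" "\<not> (ib = ic \<and> sb + sc = 0)"
  shows "ic = ia \<and> sc = - sa \<and> ie = ib \<and> se = - sb"
  using assms(1-4,6,7) sum_zero[of ia] sum_zero[of ib] sum_zero[of ic] sum_zero[of ie]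
  by (auto split: if_splits)

definition square :: "nat \<Rightarrow> edge \<Rightarrow> edge \<Rightarrow> edge \<Rightarrow> edge \<Rightarrow> bool" where
  "square d a b c e \<longleftrightarrow> lattice_edge d a \<and> lattice_edge d b \<and> lattice_edge d c \<and> lattice_edge d e \<and>
     snd a = fst b \<and> snd b = fst c \<and> snd c = fst e \<and> snd e = fst a \<and>
     snd b \<noteq> fst a \<and> snd c \<noteq> fst b"

lemma square_rotate: "square d a b c e \<Longrightarrow> square d b c e a"
  unfolding square_def by auto

lemma square_reverse: "square d a b c e \<Longrightarrow> square d (einv e) (einv c) (einv b) (einv a)"
  unfolding square_def by (auto simp: lattice_edge_einv)

lemma square_vertices_distinct:
  assumes "square d a b c e"
  shows "distinct [fst a, fst b, fst c, fst e]"
proof -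
  have "fst a \<noteq> snd a" "fst b \<noteq> snd b" "fst c \<noteq> snd c" "fst e \<noteq> snd e"
    using assms lattice_edge_fst_neq_snd unfolding square_def by blast+
  then show ?thesis using assms unfolding square_def by auto
qed

lemma plaquette_iff_square: "plaquette d p \<longleftrightarrow> (\<exists>a b c e. p = [a, b, c, e] \<and> square d a b c e)"
proof
  assume p: "plaquette d p"
  then have "length p = 4" by (simp add: plaquette_def)
  then obtain a b c e where p_eq: "p = [a, b, c, e]"
    by (auto simp: length_Suc_conv numeral_eq_Suc)
  have path: "is_path d p" and closed: "snd e = fst a" and nb: "no_backtrack p"
    using p p_eq by (auto simp: plaquette_def closed_path_def)
  have "snd (p ! i) = fst (p ! Suc i)" if "i < 3" for i
    using path that p_eq unfolding is_path_def by auto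
  from this[of 0] this[of 1] this[of 2]
  have chain: "snd a = fst b" "snd b = fst c" "snd c = fst e" using p_eq by simp_all
  have lat: "lattice_edge d a" "lattice_edge d b" "lattice_edge d c" "lattice_edge d e"
    using path p_eq unfolding is_path_def by auto
  moreover have "snd b \<noteq> fst a"
  proof
    assume "snd b = fst a"
    then have "b = einv a" using chain(1) by (simp add: einv_def prod_eq_iff)
    then have "erase1 p ([] @ [c, e])" using erase1.inner[of "[]" a "[c, e]"] p_eq by simp
    then show False using nb by (simp add: no_backtrack_def)
  qed
  moreover have "snd c \<noteq> fst b"
  proof
    assume "snd c = fst b"
    then have "c = einv b" using chain(2) by (simp add: einv_def prod_eq_iff)
    then have "erase1 p ([a] @ [e])" using erase1.inner[of "[a]" b "[e]"] p_eq by simp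
    then show False using nb by (simp add: no_backtrack_def)
  qed
  ultimately show "\<exists>a b c e. p = [a, b, c, e] \<and> square d a b c e"
    using p_eq chain closed unfolding square_def by blast
next
  assume "\<exists>a b c e. p = [a, b, c, e] \<and> square d a b c e"
  then obtain a b c e where p: "p = [a, b, c, e]" and sq: "square d a b c e" by blast
  have "is_path d p"
    unfolding is_path_def
  proof (intro conjI allI impI)
    show "\<forall>x\<in>set p. lattice_edge d x" using sq p unfolding square_def by auto
  next
    fix i assume "Suc i < length p"
    then have "i = 0 \<or> i = 1 \<or> i = 2" using p by auto
    then show "snd (p ! i) = fst (p ! Suc i)" using sq p unfolding square_def by auto
  qed
  moreover have "no_backtrack p"
    unfolding no_backtrack_def
  proof
    assume "\<exists>w'. erase1 p w'"
    then obtain w' where "erase1 p w'" by blast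
    then show False
    proof cases
      case (inner xs x ys)
      then have "(x = a \<and> einv x = b) \<or> (x = b \<and> einv x = c) \<or> (x = c \<and> einv x = e)"
        using p by (auto simp: Cons_eq_append_conv append_eq_Cons_conv)
      then show False using sq by (auto simp: square_def einv_def)
    next
      case (wrap x)
      then have "x = a \<and> einv x = e" using p by (auto simp: Cons_eq_append_conv append_eq_Cons_conv)
      then show False using sq by (auto simp: square_def einv_def)
    qed
  qed
  ultimately show "plaquette d p"
    using sq p by (simp add: plaquette_def closed_path_def square_def)
qed

lemma square_opposite_steps:
  assumes sq: "square d a b c e"
  shows "\<forall>j<d. edge_step c j = - edge_step a j \<and> edge_step e j = - edge_step b j"
proof -
  have lat: "lattice_edge d a" "lattice_edge d b" "lattice_edge d c" "lattice_edge d e"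
    using sq unfolding square_def by auto
  obtain ia sa where a: "sa = 1 \<or> sa = -1" "\<forall>j<d. edge_step a j = (if j = ia then sa else 0)" "ia < d"
    using lattice_edge_unit_step[OF lat(1)] by blast
  obtain ib sb where b: "sb = 1 \<or> sb = -1" "\<forall>j<d. edge_step b j = (if j = ib then sb else 0)" "ib < d"
    using lattice_edge_unit_step[OF lat(2)] by blast
  obtain ic sc where c: "sc = 1 \<or> sc = -1" "\<forall>j<d. edge_step c j = (if j = ic then sc else 0)" "ic < d"
    using lattice_edge_unit_step[OF lat(3)] by blast
  obtain ie se where e: "se = 1 \<or> se = -1" "\<forall>j<d. edge_step e j = (if j = ie then se else 0)" "ie < d"
    using lattice_edge_unit_step[OF lat(4)] by blast
  have closed: "edge_step a j + edge_step b j + edge_step c j + edge_step e j = 0" for j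
    using sq by (simp add: square_def edge_step_def)
  have sum_zero: "(if j = ia then sa else 0) + (if j = ib then sb else 0)
      + (if j = ic then sc else 0) + (if j = ie then se else 0) = 0" for j
  proof (cases "j < d")
    case True
    then show ?thesis
      using closed[of j] a(2) b(2) c(2) e(2) by simp
  qed (use a(3) b(3) c(3) e(3) in auto)
  have ab: "\<not> (ia = ib \<and> sa + sb = 0)"
  proof
    assume "ia = ib \<and> sa + sb = 0"
    then have "\<forall>j<d. edge_step a j + edge_step b j = 0" using a(2) b(2) by simp
    then show False using consecutive_steps_not_opposite[of d a b] sq unfolding square_def by blast
  qed
  have bc: "\<not> (ib = ic \<and> sb + sc = 0)"
  proof
    assume "ib = ic \<and> sb + sc = 0"
    then have "\<forall>j<d. edge_step b j + edge_step c j = 0" using b(2) c(2) by simp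
    then show False using consecutive_steps_not_opposite[of d b c] sq unfolding square_def by blast
  qed
  have "ic = ia \<and> sc = - sa \<and> ie = ib \<and> se = - sb"
    using signed_unit_vectors_sum_zero[OF a(1) b(1) c(1) e(1) sum_zero ab bc] .
  then show ?thesis using a(2) b(2) c(2) e(2) by auto
qed

lemma r_loop_Nil [simp]: "r_loop [] f = 0" by (simp add: r_loop_def)
lemma r_loop_Cons [simp]: "r_loop (x # xs) f = r_edge x f + r_loop xs f" by (simp add: r_loop_def)
lemma r_loop_append [simp]: "r_loop (xs @ ys) f = r_loop xs f + r_loop ys f" by (simp add: r_loop_def)

lemma r_loop_rotate1: "r_loop (rotate1 xs) = r_loop xs"
  by (cases xs) (auto simp: fun_eq_iff)

lemma r_loop_rotate: "r_loop (rotate n xs) = r_loop xs"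
  by (induction n) (auto simp: r_loop_rotate1)

lemma r_edge_einv: "fst x \<noteq> snd x \<Longrightarrow> r_edge (einv x) f = - r_edge x f"
  using not_less_iff_gr_or_eq[of "fst x" "snd x"]
  by (auto simp: r_edge_def lex_less_iff_less dest: less_asym)

definition plaquette_boundary :: "nat \<Rightarrow> (edge \<Rightarrow> int) \<Rightarrow> bool" where
  "plaquette_boundary d X \<longleftrightarrow> (\<exists>q. plaq_pos d q \<and> (X = delta_p q \<or> X = (\<lambda>f. - delta_p q f)))"

lemma plaquette_boundary_uminus:
  "plaquette_boundary d X \<Longrightarrow> plaquette_boundary d (\<lambda>f. - X f)"
  unfolding plaquette_boundary_def by auto

lemma square_boundary_eq_delta_p:
  assumes sq: "square d a b c e"
    and min: "fst a < fst b" "fst a < fst c" "fst a < fst e"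
    and second: "snd a < fst e"
  shows "plaq_pos d [a, b, c, e] \<and> r_loop [a, b, c, e] = delta_p [a, b, c, e]"
proof -
  have lat: "lattice_edge d a" "lattice_edge d b" "lattice_edge d c" "lattice_edge d e"
    and chain: "snd a = fst b" "snd b = fst c" "snd c = fst e" "snd e = fst a"
    using sq unfolding square_def by auto
  have opp: "\<forall>j<d. edge_step c j = - edge_step a j \<and> edge_step e j = - edge_step b j"
    using square_opposite_steps[OF sq] .
  have len: "length (fst a) = d" "length (fst b) = d" "length (fst c) = d" "length (fst e) = d"
    using lat lattice_edge_unit_step by blast+
  txt \<open>Opposite sides are translates, so the order of \<open>fst a\<close> below \<open>fst e\<close> and \<open>fst b\<close>
    carries over: \<open>a, b\<close> are positively and \<open>c, e\<close> negatively oriented.\<close>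
  have "fst b < fst c"
    by (rule less_list_translate[where u = "fst a" and v = "fst e"])
      (use opp len chain min in \<open>auto simp: edge_step_def\<close>)
  moreover have "fst e < fst c"
    by (rule less_list_translate[where u = "fst a" and v = "fst b"])
      (use opp len chain min in \<open>auto simp: edge_step_def\<close>)
  ultimately have r: "r_edge a = ind a" "r_edge b = ind b"
      "r_edge c = (\<lambda>f. - ind (einv c) f)" "r_edge e = (\<lambda>f. - ind (einv e) f)"
    using min chain by (auto simp: r_edge_def lex_less_iff_less dest: less_asym)
  have "plaquette d [a, b, c, e]" using plaquette_iff_square sq by blast
  then have "plaq_pos d [a, b, c, e]"
    using min second chain \<open>fst b < fst c\<close> unfolding plaq_pos_def lex_less_iff_less by auto
  then show ?thesis by (simp add: fun_eq_iff r delta_p_def)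
qed

lemma square_boundary_from_min:
  assumes sq: "square d a b c e"
    and min: "fst a < fst b" "fst a < fst c" "fst a < fst e"
  shows "plaquette_boundary d (r_loop [a, b, c, e])"
proof (cases "snd a < fst e")
  case True
  then show ?thesis
    using square_boundary_eq_delta_p[OF sq min] unfolding plaquette_boundary_def by auto
next
  case False
  have chain: "snd a = fst b" "snd b = fst c" "snd c = fst e" "snd e = fst a"
    using sq unfolding square_def by auto
  have "snd a \<noteq> fst e" using square_vertices_distinct[OF sq] chain by auto
  with False have "fst e < snd a" by simp
  txt \<open>Then \<open>fst e\<close> is the second smallest vertex and the reversed square lies in \<open>P\<^sup>+\<close>.\<close>
  then have "plaquette_boundary d (r_loop [einv e, einv c, einv b, einv a])"
    using square_boundary_eq_delta_p[OF square_reverse[OF sq]] min chain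
    unfolding plaquette_boundary_def by auto
  moreover have "fst a \<noteq> snd a" "fst b \<noteq> snd b" "fst c \<noteq> snd c" "fst e \<noteq> snd e"
    using sq lattice_edge_fst_neq_snd unfolding square_def by blast+
  then have "r_loop [a, b, c, e] = (\<lambda>f. - r_loop [einv e, einv c, einv b, einv a] f)"
    by (simp add: fun_eq_iff r_edge_einv)
  ultimately show ?thesis by (metis plaquette_boundary_uminus)
qed

lemma plaquette_boundary_r_loop:
  assumes "plaquette d p"
  shows "plaquette_boundary d (r_loop p)"
proof -
  obtain a b c e where p: "p = [a, b, c, e]" and sq: "square d a b c e"
    using assms plaquette_iff_square by blast
  define V where "V = {fst a, fst b, fst c, fst e}"
  have V: "fst a \<in> V" "fst b \<in> V" "fst c \<in> V" "fst e \<in> V" "finite V"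
    unfolding V_def by simp_all
  have min_less: "Min V < w" if "w \<in> V" "w \<noteq> Min V" for w
    using that Min_le[OF V(5)] by (simp add: order_le_neq_trans)
  have dist: "distinct [fst a, fst b, fst c, fst e]" using square_vertices_distinct[OF sq] .
  have rotations: "r_loop [b, c, e, a] = r_loop p" "r_loop [c, e, a, b] = r_loop p"
    "r_loop [e, a, b, c] = r_loop p"
    using r_loop_rotate[of 1 p] r_loop_rotate[of 2 p] r_loop_rotate[of 3 p] p
    by (simp_all add: numeral_eq_Suc)
  have "Min V \<in> V" using V by (intro Min_in) auto
  then consider "Min V = fst a" | "Min V = fst b" | "Min V = fst c" | "Min V = fst e"
    unfolding V_def by auto
  then show ?thesis
  proof cases
    case 1
    then show ?thesis using square_boundary_from_min[OF sq] min_less V dist p by fastforce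
  next
    case 2
    then show ?thesis
      using square_boundary_from_min[OF square_rotate[OF sq]] min_less V dist rotations p by fastforce
  next
    case 3
    then show ?thesis
      using square_boundary_from_min[OF square_rotate[OF square_rotate[OF sq]]] min_less V dist rotations p
      by fastforce
  next
    case 4
    then show ?thesis
      using square_boundary_from_min[OF square_rotate[OF square_rotate[OF square_rotate[OF sq]]]]
        min_less V dist rotations p by fastforce
  qed
qed

text \<open>\<open>r (einv e) = - r e\<close> fails for a degenerate edge with \<open>fst e = snd e\<close>; lattice
  paths have none, and erasing backtracks cannot create one.\<close>

definition no_self_loops :: "edge list \<Rightarrow> bool" where
  "no_self_loops w \<longleftrightarrow> (\<forall>x\<in>set w. fst x \<noteq> snd x)"

lemma no_self_loops_Nil [simp]: "no_self_loops []"
  by (simp add: no_self_loops_def)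

lemma no_self_loops_append [simp]: "no_self_loops (xs @ ys) \<longleftrightarrow> no_self_loops xs \<and> no_self_loops ys"
  by (auto simp: no_self_loops_def)

lemma no_self_loops_Cons [simp]: "no_self_loops (x # ys) \<longleftrightarrow> fst x \<noteq> snd x \<and> no_self_loops ys"
  by (auto simp: no_self_loops_def)

lemma no_self_loops_pinv [simp]: "no_self_loops (pinv c) \<longleftrightarrow> no_self_loops c"
  by (auto simp: no_self_loops_def pinv_def)

lemma closed_path_no_self_loops: "closed_path d w \<Longrightarrow> no_self_loops w"
  unfolding closed_path_def is_path_def no_self_loops_def using lattice_edge_fst_neq_snd by blast

lemma r_loop_pinv: "no_self_loops c \<Longrightarrow> r_loop (pinv c) f = - r_loop c f"
  by (induction c) (auto simp: pinv_def r_edge_einv)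

lemma erase1_r_loop:
  "erase1 w w' \<Longrightarrow> no_self_loops w \<Longrightarrow> r_loop w' = r_loop w \<and> set w' \<subseteq> set w"
  by (induction rule: erase1.induct) (auto simp: fun_eq_iff r_edge_einv)

lemma erase1_rtranclp_r_loop:
  assumes "erase1\<^sup>*\<^sup>* w w'" "no_self_loops w"
  shows "r_loop w' = r_loop w"
proof -
  from assms have "r_loop w' = r_loop w \<and> set w' \<subseteq> set w"
  proof (induction rule: rtranclp_induct)
    case (step y z)
    then have "no_self_loops y" by (auto simp: no_self_loops_def)
    with step show ?case using erase1_r_loop[OF step(2)] by auto
  qed simp
  then show ?thesis ..
qed

lemma reduces_r_loop: "reduces w l \<Longrightarrow> no_self_loops w \<Longrightarrow> r_loop l = r_loop w"
  unfolding reduces_def rot_eq_def by (metis erase1_rtranclp_r_loop r_loop_rotate)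

lemma deform_r_loop:
  assumes "deform d l l'"
  shows "\<exists>X. plaquette_boundary d X \<and> r_loop l' = (\<lambda>f. r_loop l f + X f)"
proof -
  have nsl: "no_self_loops l"
    using assms closed_path_no_self_loops unfolding deform_def is_loop_def by blast
  obtain a e b c g p where l: "l = a @ [e] @ b" and pl: "plaquette d p" and
    cases: "(p = c @ [e] @ g \<and>
          (reduces (a @ [e] @ g @ c @ [e] @ b) l' \<or> reduces (a @ pinv c @ pinv g @ b) l')) \<or>
       (p = c @ [einv e] @ g \<and>
          (reduces (a @ [e] @ pinv c @ pinv g @ [e] @ b) l' \<or> reduces (a @ g @ c @ b) l'))"
    using assms unfolding deform_def by blast
  have nsp: "no_self_loops p" using pl closed_path_no_self_loops unfolding plaquette_def by blast
  have "r_loop l' = (\<lambda>f. r_loop l f + r_loop p f) \<or> r_loop l' = (\<lambda>f. r_loop l f + - r_loop p f)"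
    using cases
  proof (elim disjE conjE)
    assume "p = c @ [e] @ g" "reduces (a @ [e] @ g @ c @ [e] @ b) l'"
    then show ?thesis using reduces_r_loop nsl nsp l by (auto simp: fun_eq_iff)
  next
    assume "p = c @ [e] @ g" "reduces (a @ pinv c @ pinv g @ b) l'"
    then show ?thesis using reduces_r_loop nsl nsp l by (auto simp: fun_eq_iff r_loop_pinv)
  next
    assume "p = c @ [einv e] @ g" "reduces (a @ [e] @ pinv c @ pinv g @ [e] @ b) l'"
    then show ?thesis using reduces_r_loop nsl nsp l by (auto simp: fun_eq_iff r_loop_pinv r_edge_einv)
  next
    assume "p = c @ [einv e] @ g" "reduces (a @ g @ c @ b) l'"
    then show ?thesis using reduces_r_loop nsl nsp l by (auto simp: fun_eq_iff r_edge_einv)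
  qed
  then show ?thesis
    using plaquette_boundary_r_loop[OF pl] plaquette_boundary_uminus by blast
qed

lemma split_loop_r_loop:
  assumes "split_loop d l l1 l2"
  shows "r_loop l1 f + r_loop l2 f = r_loop l f"
proof -
  have nsl: "no_self_loops l"
    using assms closed_path_no_self_loops unfolding split_loop_def is_loop_def by blast
  obtain a e b c where
    "(l = a @ [e] @ b @ [e] @ c \<and> reduces (a @ [e] @ c) l1 \<and> reduces (b @ [e]) l2) \<or>
     (l = a @ [e] @ b @ [einv e] @ c \<and> reduces (a @ c) l1 \<and> reduces b l2)"
    using assms unfolding split_loop_def by blast
  then show ?thesis
  proof (elim disjE conjE)
    assume "l = a @ [e] @ b @ [e] @ c" "reduces (a @ [e] @ c) l1" "reduces (b @ [e]) l2"
    then show ?thesis using reduces_r_loop[of "a @ [e] @ c" l1] reduces_r_loop[of "b @ [e]" l2] nsl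
      by simp
  next
    assume "l = a @ [e] @ b @ [einv e] @ c" "reduces (a @ c) l1" "reduces b l2"
    then show ?thesis using reduces_r_loop[of "a @ c" l1] reduces_r_loop[of b l2] nsl
      by (simp add: r_edge_einv)
  qed
qed

definition seq_chain :: "edge list list \<Rightarrow> edge \<Rightarrow> int" where
  "seq_chain s f = (\<Sum>l\<leftarrow>s. r_loop l f)"

lemma seq_chain_Nil [simp]: "seq_chain [] f = 0" by (simp add: seq_chain_def)
lemma seq_chain_Cons [simp]: "seq_chain (l # s) f = r_loop l f + seq_chain s f" by (simp add: seq_chain_def)
lemma seq_chain_append [simp]: "seq_chain (s @ t) f = seq_chain s f + seq_chain t f" by (simp add: seq_chain_def)

lemma seq_chain_seq_eq: "seq_eq s t \<Longrightarrow> seq_chain s = seq_chain t"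
proof -
  have "seq_chain (filter (\<lambda>x. x \<noteq> []) s) = seq_chain s" for s
    by (induction s) (auto simp: fun_eq_iff)
  moreover have "list_all2 rot_eq s t \<Longrightarrow> seq_chain s = seq_chain t" for s t
    by (induction rule: list_all2_induct) (auto simp: fun_eq_iff rot_eq_def r_loop_rotate)
  ultimately show "seq_eq s t \<Longrightarrow> seq_chain s = seq_chain t" unfolding seq_eq_def by metis
qed

lemma traj_step_deform_chain:
  assumes "traj_step d True s s'"
  shows "\<exists>X. plaquette_boundary d X \<and> seq_chain s' = (\<lambda>f. seq_chain s f + X f)"
proof -
  obtain A l B l' where "seq_eq s (A @ [l] @ B)" "seq_eq s' (A @ [l'] @ B)" "deform d l l'"
    using assms unfolding traj_step_def by auto
  then show ?thesis using deform_r_loop seq_chain_seq_eq by (fastforce simp: fun_eq_iff)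
qed

lemma traj_step_split_chain:
  assumes "traj_step d False s s'"
  shows "seq_chain s' = seq_chain s"
proof -
  obtain A l B l1 l2 where "seq_eq s (A @ [l] @ B)" "seq_eq s' (A @ [l1, l2] @ B)" "split_loop d l l1 l2"
    using assms unfolding traj_step_def by auto
  then show ?thesis using split_loop_r_loop seq_chain_seq_eq by (fastforce simp: fun_eq_iff)
qed

lemma delta_eq_sum_superset:
  "finite S \<Longrightarrow> {p. x p \<noteq> 0} \<subseteq> S \<Longrightarrow> delta x f = (\<Sum>p\<in>S. x p * delta_p p f)"
  unfolding delta_def by (rule sum.mono_neutral_left) auto

lemma surf_area_eq_sum_superset:
  "finite S \<Longrightarrow> {p. x p \<noteq> 0} \<subseteq> S \<Longrightarrow> surf_area x = (\<Sum>p\<in>S. nat \<bar>x p\<bar>)"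
  unfolding surf_area_def by (rule sum.mono_neutral_left) auto

lemma surface_update:
  fixes c :: int
  assumes x: "surface d x" and q: "plaq_pos d q"
  defines "x' \<equiv> x(q := x q + c)"
  shows "surface d x'" and "delta x' f = delta x f + c * delta_p q f"
    and "surf_area x' \<le> surf_area x + nat \<bar>c\<bar>"
proof -
  define S where "S = insert q {p. x p \<noteq> 0}"
  have S: "finite S" "q \<in> S" "{p. x p \<noteq> 0} \<subseteq> S" "{p. x' p \<noteq> 0} \<subseteq> S"
    using x unfolding surface_def S_def x'_def by auto
  have rest: "(\<Sum>p\<in>S - {q}. g (x' p) p) = (\<Sum>p\<in>S - {q}. g (x p) p)"
    for g :: "int \<Rightarrow> _ \<Rightarrow> 'b::comm_monoid_add"
    by (rule sum.cong) (auto simp: x'_def)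
  show "surface d x'"
    using x q finite_subset[OF S(4,1)] unfolding surface_def x'_def by auto
  have "delta x' f = x' q * delta_p q f + (\<Sum>p\<in>S - {q}. x' p * delta_p p f)"
    using delta_eq_sum_superset[OF S(1,4)] sum.remove[OF S(1,2)] by simp
  also have "\<dots> = (x q + c) * delta_p q f + (\<Sum>p\<in>S - {q}. x p * delta_p p f)"
    using rest[of "\<lambda>a p. a * delta_p p f"] by (simp add: x'_def)
  also have "\<dots> = delta x f + c * delta_p q f"
    using delta_eq_sum_superset[OF S(1,3)] sum.remove[OF S(1,2), of "\<lambda>p. x p * delta_p p f"]
    by (simp add: algebra_simps)
  finally show "delta x' f = delta x f + c * delta_p q f" .
  have "surf_area x' = nat \<bar>x' q\<bar> + (\<Sum>p\<in>S - {q}. nat \<bar>x' p\<bar>)"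
    using surf_area_eq_sum_superset[OF S(1,4)] sum.remove[OF S(1,2)] by simp
  also have "\<dots> = nat \<bar>x q + c\<bar> + (\<Sum>p\<in>S - {q}. nat \<bar>x p\<bar>)"
    using rest[of "\<lambda>a p. nat \<bar>a\<bar>"] by (simp add: x'_def)
  also have "\<dots> \<le> nat \<bar>x q\<bar> + (\<Sum>p\<in>S - {q}. nat \<bar>x p\<bar>) + nat \<bar>c\<bar>"
    by simp
  also have "\<dots> = surf_area x + nat \<bar>c\<bar>"
    using surf_area_eq_sum_superset[OF S(1,3)] sum.remove[OF S(1,2), of "\<lambda>p. nat \<bar>x p\<bar>"] by simp
  finally show "surf_area x' \<le> surf_area x + nat \<bar>c\<bar>" .
qed

lemma surface_add_plaquette_boundary:
  assumes "surface d x" "plaquette_boundary d X"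
  shows "\<exists>x'. surface d x' \<and> delta x' = (\<lambda>f. delta x f + X f) \<and> surf_area x' \<le> surf_area x + 1"
proof -
  obtain q c where "plaq_pos d q" "c = 1 \<or> c = -1" "X = (\<lambda>f. c * delta_p q f)"
    using assms(2) unfolding plaquette_boundary_def by (metis mult_1 mult_minus1)
  then show ?thesis
    using surface_update[OF assms(1), of q c] by (intro exI[of _ "x(q := x q + c)"]) auto
qed

lemma traj_prefix_surface:
  assumes steps: "\<forall>i<length ks. traj_step d (ks ! i) (s ! i) (s ! Suc i)"
  shows "n \<le> length ks \<Longrightarrow> \<exists>x. surface d x
      \<and> delta x = (\<lambda>f. seq_chain (s ! 0) f - seq_chain (s ! n) f)
      \<and> surf_area x \<le> length (filter (\<lambda>k. k) (take n ks))"
proof (induction n)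
  case 0
  have "surface d (\<lambda>_. 0)" "delta (\<lambda>_. 0) = (\<lambda>_. 0)" "surf_area (\<lambda>_. 0) = 0"
    by (simp_all add: surface_def delta_def surf_area_def fun_eq_iff)
  then show ?case by (intro exI[of _ "\<lambda>_. 0"]) auto
next
  case (Suc n)
  then obtain x where x: "surface d x" "delta x = (\<lambda>f. seq_chain (s ! 0) f - seq_chain (s ! n) f)"
    "surf_area x \<le> length (filter (\<lambda>k. k) (take n ks))" by auto
  have step: "traj_step d (ks ! n) (s ! n) (s ! Suc n)" using steps Suc.prems by simp
  have take: "take (Suc n) ks = take n ks @ [ks ! n]" using Suc.prems by (simp add: take_Suc_conv_app_nth)
  show ?case
  proof (cases "ks ! n")
    case True
    then obtain X where X: "plaquette_boundary d X"
      "seq_chain (s ! Suc n) = (\<lambda>f. seq_chain (s ! n) f + X f)"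
      using traj_step_deform_chain step by fastforce
    obtain x' where "surface d x'" "delta x' = (\<lambda>f. delta x f + - X f)"
      "surf_area x' \<le> surf_area x + 1"
      using surface_add_plaquette_boundary[OF x(1) plaquette_boundary_uminus[OF X(1)]] by blast
    then show ?thesis using x X True take by (intro exI[of _ x']) (auto simp: fun_eq_iff)
  next
    case False
    then show ?thesis using x traj_step_split_chain step take by auto
  qed
qed

theorem lemma14p1:
  fixes d :: nat and l :: "edge list" and s :: "edge list list list" and ks :: "bool list"
  assumes "d \<ge> 2"
    and "is_loop d l" and "l \<noteq> []"
    and "vanishing_traj d s ks"
    and "seq_eq (hd s) [l]"
  shows "loop_area d l \<le> length (filter (\<lambda>k. k) ks)"
proof -
  have ne: "s \<noteq> []" and len: "length ks = length s - 1" and last: "seq_eq (last s) []"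
    and steps: "\<forall>i<length ks. traj_step d (ks ! i) (s ! i) (s ! Suc i)"
    using assms(4) unfolding vanishing_traj_def by auto
  obtain x where x: "surface d x" "surf_area x \<le> length (filter (\<lambda>k. k) ks)"
    and boundary: "delta x = (\<lambda>f. seq_chain (s ! 0) f - seq_chain (s ! length ks) f)"
    using traj_prefix_surface[OF steps, of "length ks"] by auto
  have "seq_chain (s ! 0) = r_loop l"
    using seq_chain_seq_eq[OF assms(5)] ne by (simp add: hd_conv_nth fun_eq_iff)
  moreover have "seq_chain (s ! length ks) = (\<lambda>_. 0)"
    using seq_chain_seq_eq[OF last] ne len by (simp add: last_conv_nth fun_eq_iff)
  ultimately have "delta x = r_loop l" using boundary by simp
  then have "loop_area d l \<le> surf_area x"
    unfolding loop_area_def using x(1) by (intro Least_le) blast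
  with x(2) show ?thesis by simp
qed

end
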